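(* Let $N:\mathbb R_+\to\mathbb R_+$ be measurable and let $\mathbf P\subset\mathbb P_{[0,1]}$ be a finite convex collection of bitiles with $\operatorname{mass}(\mathbf P)>0$. Then $\mathbf P=\mathbf P_{hi}\cup\mathbf P_{lo}$ (disjoint union) where (i) $\mathbf P_{hi}$ and $\mathbf P_{lo}$ are both convex; (ii) $\operatorname{mass}(\mathbf P_{lo})\le\frac12\operatorname{mass}(\mathbf P)$; (iii) $\mathbf P_{hi}$ is a convex forest whose trees $T\in\mathcal F$ satisfy $\sum_{T\in\mathcal F}|I_T|\lesssim\operatorname{mass}(\mathbf P)^{-1}$, with an absolute implicit constant.
   Context: Notation. $\mathbb R_+=[0,\infty)$. $\mathcal D_+$ denotes the set of dyadic intervals $[2^jm,2^j(m+1))$ with $j\in\mathbb Z$, $m\in\mathbb Z_{\ge 0}$. A bitile is $P=I_P\times\omega_P$ with $I_P,\omega_P\in\mathcal D_+$ and $|I_P||\omega_P|=2$. $\mathbb P_{all}$ is the set of all bitiles, and $\mathbb P_{[0,1]}=\{P\in\mathbb P_{all}:I_P\subset[0,1]\}$. For bitiles, $P\le P'$ means $I_P\subset I_{P'}$ and $\omega_{P'}\subset\omega_P$. A collection $\mathbf P$ of bitiles is convex if $P,P''\in\mathbf P$, $P'\in\mathbb P_{all}$ and $P\le P'\le P''$ imply $P'\in\mathbf P$. A tree $T$ with top data $(I_T,\xi_T)$, where $I_T\in\mathcal D_+$ and $\xi_T\in\mathbb R_+$ is not a dyadic rational, is a collection of bitiles with $I_P\subset I_T$ and $\xi_T\in\omega_P$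 for all $P\in T$. A forest is a finite collection of bitiles which is a disjoint union of convex trees $T\in\mathcal F$ (the trees together with their top data are part of the data of the forest); it is a convex forest if moreover the whole collection is convex. Mass (relative to the fixed choice function $N$): $E(P)=I_P\cap N^{-1}(\omega_P)$ and $\operatorname{mass}(\mathbf P)=\sup_{P\in\mathbf P}|E(P)|/|I_P|$. *)

theory Defs
  imports "HOL-Analysis.Analysis"
begin

definition dyadic_int :: "real set \<Rightarrow> bool" where
  "dyadic_int I \<longleftrightarrow> (\<exists>(j::int) (m::nat). I = {2 powr j * real m ..< 2 powr j * (real m + 1)})"

definition ilen :: "real set \<Rightarrow> real" where
  "ilen I = measure lborel I"

text \<open>A bitile P = I_P x omega_P is represented as the pair (I_P, omega_P).\<close>
type_synonym bitile = "real set \<times> real set"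

definition is_bitile :: "bitile \<Rightarrow> bool" where
  "is_bitile P \<longleftrightarrow> dyadic_int (fst P) \<and> dyadic_int (snd P) \<and> ilen (fst P) * ilen (snd P) = 2"

definition bitiles01 :: "bitile set" where
  "bitiles01 = {P. is_bitile P \<and> fst P \<subseteq> {0..1}}"

definition tile_le :: "bitile \<Rightarrow> bitile \<Rightarrow> bool" where
  "tile_le P P' \<longleftrightarrow> fst P \<subseteq> fst P' \<and> snd P' \<subseteq> snd P"

definition convex_tiles :: "bitile set \<Rightarrow> bool" where
  "convex_tiles Ps \<longleftrightarrow> (\<forall>P\<in>Ps. \<forall>P''\<in>Ps. \<forall>P'. is_bitile P' \<and> tile_le P P' \<and> tile_le P' P'' \<longrightarrow> P' \<in> Ps)"

definition dyadic_rational :: "real \<Rightarrow> bool" where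
  "dyadic_rational x \<longleftrightarrow> (\<exists>(k::int) (n::nat). x = real_of_int k / 2 ^ n)"

definition is_tree :: "bitile set \<Rightarrow> real set \<Rightarrow> real \<Rightarrow> bool" where
  "is_tree T IT xi \<longleftrightarrow> dyadic_int IT \<and> xi \<ge> 0 \<and> \<not> dyadic_rational xi \<and>
     (\<forall>P\<in>T. fst P \<subseteq> IT \<and> xi \<in> snd P)"

text \<open>A forest: the finite collection Ps of bitiles is the disjoint union of the convex trees
  in the finite family F; each element of F is a triple (T, I_T, xi_T) (tree with its top data).\<close>
definition is_forest :: "bitile set \<Rightarrow> (bitile set \<times> real set \<times> real) set \<Rightarrow> bool" where
  "is_forest Ps F \<longleftrightarrow> finite Ps \<and> finite F \<and> (\<forall>P\<in>Ps. is_bitile P) \<and>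
     (\<forall>(T, IT, xi)\<in>F. is_tree T IT xi \<and> convex_tiles T) \<and>
     Ps = (\<Union>f\<in>F. fst f) \<and>
     (\<forall>f\<in>F. \<forall>g\<in>F. f \<noteq> g \<longrightarrow> fst f \<inter> fst g = {})"

definition convex_forest :: "bitile set \<Rightarrow> (bitile set \<times> real set \<times> real) set \<Rightarrow> bool" where
  "convex_forest Ps F \<longleftrightarrow> is_forest Ps F \<and> convex_tiles Ps"

definition Eset :: "(real \<Rightarrow> real) \<Rightarrow> bitile \<Rightarrow> real set" where
  "Eset N P = fst P \<inter> N -` snd P"

definition mass :: "(real \<Rightarrow> real) \<Rightarrow> bitile set \<Rightarrow> real" where
  "mass N Ps = (if Ps = {} then 0 else Sup ((\<lambda>P. measure lebesgue (Eset N P) / ilen (fst P)) ` Ps))"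

end

theory Submission imports Defs begin

(* Let mu = mass(P) and call a tile dense if |E(P)|/|I_P| > mu/2.  Put into P_hi every
   tile of P lying below some dense tile, and the rest into P_lo.  A down-closed part of a
   convex collection and its complement are both convex, and P_lo contains no dense tile,
   so mass(P_lo) <= mu/2.  Every tile of P_hi lies below a maximal dense tile M; ordering
   the maximal tiles and sending each tile to the first maximal tile above it splits P_hi
   into disjoint convex trees with tops (I_M, xi_M), xi_M a non-dyadic point of omega_M.
   Two bitiles whose sets E meet are comparable (dyadic intervals are nested or disjoint),
   so the maximal dense tiles have pairwise disjoint sets E(M) in [0,1], whence
   sum |I_M| < (2/mu) sum |E(M)| <= 2/mu.  The theorem thus holds with constant 2. *)

lemma dyadic_intE:
  assumes "dyadic_int I"
  obtains j :: int and m :: nat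
  where "I = {2 powr j * real m ..< 2 powr j * real m + 2 powr j}" "ilen I = 2 powr j"
proof -
  obtain j :: int and m :: nat where I: "I = {2 powr j * real m ..< 2 powr j * (real m + 1)}"
    using assms unfolding dyadic_int_def by blast
  then show ?thesis
    using that[of j m] by (simp add: ilen_def distrib_left)
qed

lemma ilen_dyadic_pos: "dyadic_int I \<Longrightarrow> ilen I > 0"
  by (erule dyadic_intE) auto

text \<open>Integer intervals: if the unit interval \<open>[m, m+1)\<close> meets \<open>[k n, k (n+1))\<close> for a
  natural number \<open>k\<close>, it is contained in it.  This is the rescaled form of nestedness.\<close>
lemma unit_interval_nested:
  fixes m n k :: nat and y :: real
  assumes "real m \<le> y" "y < real m + 1" "real k * real n \<le> y" "y < real k * real n + real k"
  shows "real k * real n \<le> real m" "real m + 1 \<le> real k * real n + real k"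
proof -
  have "real (k * n) < real (m + 1)" "real m < real (k * n + k)"
    using assms by simp_all
  then have "k * n < m + 1" "m < k * n + k"
    by (simp_all only: of_nat_less_iff)
  then have "k * n \<le> m" "m + 1 \<le> k * n + k" by simp_all
  then have "real (k * n) \<le> real m" "real (m + 1) \<le> real (k * n + k)"
    by (simp_all only: of_nat_le_iff)
  then show "real k * real n \<le> real m" "real m + 1 \<le> real k * real n + real k"
    by simp_all
qed

lemma dyadic_nested:
  assumes I: "dyadic_int I" and J: "dyadic_int J" and x: "x \<in> I" "x \<in> J"
    and len: "ilen I \<le> ilen J"
  shows "I \<subseteq> J"
proof -
  obtain i :: int and m :: nat
    where Ii: "I = {2 powr i * real m ..< 2 powr i * real m + 2 powr i}" "ilen I = 2 powr i"
    using I by (rule dyadic_intE)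
  obtain j :: int and n :: nat
    where Jj: "J = {2 powr j * real n ..< 2 powr j * real n + 2 powr j}" "ilen J = 2 powr j"
    using J by (rule dyadic_intE)
  define c where "c = 2 powr i"
  define d where "d = nat (j - i)"
  have c: "c > 0" by (simp add: c_def)
  have "i \<le> j" using len Ii Jj by simp
  then have "real_of_int j = real_of_int i + real d" by (simp add: d_def)
  then have pj: "2 powr j = c * real (2 ^ d)"
    by (simp add: c_def powr_add powr_realpow)
  have "real m \<le> x / c" "x / c < real m + 1"
    using x(1) c unfolding Ii c_def[symmetric] by (simp_all add: field_simps)
  moreover have "real (2 ^ d) * real n \<le> x / c" "x / c < real (2 ^ d) * real n + real (2 ^ d)"
    using x(2) c unfolding Jj pj by (simp_all add: field_simps)
  ultimately have "real (2 ^ d) * real n \<le> real m" "real m + 1 \<le> real (2 ^ d) * real n + real (2 ^ d)"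
    by (rule unit_interval_nested)+
  then have "c * (real (2 ^ d) * real n) \<le> c * real m"
    "c * (real m + 1) \<le> c * (real (2 ^ d) * real n + real (2 ^ d))"
    using c by (simp_all add: mult_left_mono)
  then show ?thesis
    unfolding Ii Jj c_def[symmetric] pj by (auto simp: algebra_simps)
qed

text \<open>Every dyadic interval contains a non-dyadic point (the dyadic rationals are countable);
  such points serve as the frequencies \<open>\<xi>_T\<close> of tree tops.\<close>
lemma nondyadic_point:
  assumes "dyadic_int I"
  obtains \<xi> where "\<xi> \<in> I" "\<xi> \<ge> 0" "\<not> dyadic_rational \<xi>"
proof -
  obtain j :: int and m :: nat where I: "I = {2 powr j * real m ..< 2 powr j * real m + 2 powr j}"
    using assms by (rule dyadic_intE)
  define a where "a = 2 powr j * real m"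
  have "{x. dyadic_rational x} \<subseteq> (\<lambda>(k::int, n::nat). real_of_int k / 2 ^ n) ` UNIV"
    unfolding dyadic_rational_def by auto
  then have "countable {x. dyadic_rational x}"
    by (rule countable_subset) simp
  moreover have "uncountable {a <..< a + 2 powr j}"
    by (simp add: uncountable_open_interval)
  ultimately have "\<not> {a <..< a + 2 powr j} \<subseteq> {x. dyadic_rational x}"
    using countable_subset by blast
  then obtain \<xi> where \<xi>: "\<xi> \<in> {a <..< a + 2 powr j}" "\<not> dyadic_rational \<xi>"
    by blast
  have "a \<ge> 0" by (simp add: a_def)
  with \<xi> show ?thesis
    by (intro that[of \<xi>]) (auto simp: I a_def[symmetric])
qed

lemma tile_le_refl: "tile_le P P"
  unfolding tile_le_def by blast

lemma tile_le_trans: "tile_le P Q \<Longrightarrow> tile_le Q R \<Longrightarrow> tile_le P R"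
  unfolding tile_le_def by blast

lemma tile_le_antisym: "tile_le P Q \<Longrightarrow> tile_le Q P \<Longrightarrow> P = Q"
  unfolding tile_le_def by (metis prod_eqI subset_antisym)

lemma equal_area_sides:
  fixes a b c d :: real
  assumes "a > 0" "b > 0" "c > 0" "d > 0" and area: "a * b = c * d"
  shows "a \<le> c \<longleftrightarrow> d \<le> b"
proof
  assume "a \<le> c"
  show "d \<le> b"
  proof (rule ccontr)
    assume "\<not> d \<le> b"
    then have "a * b < c * d" using \<open>a \<le> c\<close> assms mult_le_less_imp_less[of a c b d] by simp
    then show False using area by simp
  qed
next
  assume "d \<le> b"
  show "a \<le> c"
  proof (rule ccontr)
    assume "\<not> a \<le> c"
    then have "d * c < b * a" using \<open>d \<le> b\<close> assms mult_le_less_imp_less[of d b c a] by simp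
    then show False using area by (simp add: mult.commute)
  qed
qed

text \<open>Bitiles whose time intervals and whose frequency intervals both intersect are comparable:
  since \<open>|I||\<omega>| = 2\<close>, the shorter time interval goes with the longer frequency interval.\<close>
lemma bitiles_comparable:
  assumes P: "is_bitile P" and Q: "is_bitile Q"
    and x: "x \<in> fst P" "x \<in> fst Q" and y: "y \<in> snd P" "y \<in> snd Q"
  shows "tile_le P Q \<or> tile_le Q P"
proof -
  have pos: "ilen (fst P) > 0" "ilen (snd P) > 0" "ilen (fst Q) > 0" "ilen (snd Q) > 0"
    using P Q by (auto simp: is_bitile_def intro: ilen_dyadic_pos)
  have area: "ilen (fst P) * ilen (snd P) = ilen (fst Q) * ilen (snd Q)"
    using P Q by (simp add: is_bitile_def)
  have lens: "ilen (fst P) \<le> ilen (fst Q) \<longleftrightarrow> ilen (snd Q) \<le> ilen (snd P)"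
    using pos area by (rule equal_area_sides)
  have dy: "dyadic_int (fst P)" "dyadic_int (snd P)" "dyadic_int (fst Q)" "dyadic_int (snd Q)"
    using P Q by (simp_all add: is_bitile_def)
  show ?thesis
  proof (cases "ilen (fst P) \<le> ilen (fst Q)")
    case True
    then show ?thesis
      using lens dyadic_nested[OF dy(1,3) x] dyadic_nested[OF dy(4,2) y(2,1)]
      by (simp add: tile_le_def)
  next
    case False
    then show ?thesis
      using lens dyadic_nested[OF dy(3,1) x(2,1)] dyadic_nested[OF dy(2,4) y]
      by (simp add: tile_le_def)
  qed
qed

definition down_closure :: "bitile set \<Rightarrow> bitile set \<Rightarrow> bitile set" where
  "down_closure Ps D = {P \<in> Ps. \<exists>Q\<in>D. tile_le P Q}"

lemma convex_down_closure:
  assumes "convex_tiles Ps"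
  shows "convex_tiles (down_closure Ps D)"
  using assms tile_le_trans unfolding convex_tiles_def down_closure_def by blast

lemma convex_diff_down_closure:
  assumes "convex_tiles Ps"
  shows "convex_tiles (Ps - down_closure Ps D)"
  using assms tile_le_trans unfolding convex_tiles_def down_closure_def by blast

definition maximal_tiles :: "bitile set \<Rightarrow> bitile set" where
  "maximal_tiles D = {M \<in> D. \<forall>M'\<in>D. tile_le M M' \<longrightarrow> M' = M}"

text \<open>In a finite collection every tile lies below a maximal one: take a tile above \<open>P\<close>
  with the largest number of tiles below it.\<close>
lemma exists_maximal_above:
  assumes fin: "finite D" and P: "P \<in> D"
  shows "\<exists>M\<in>maximal_tiles D. tile_le P M"
proof -
  define S where "S = {M \<in> D. tile_le P M}"
  define below where "below M = card {Q \<in> D. tile_le Q M}" for M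
  have "finite S" "P \<in> S" using fin P tile_le_refl by (auto simp: S_def)
  then have "Max (below ` S) \<in> below ` S" by (intro Max_in) auto
  then obtain M where M: "M \<in> S" "\<And>M'. M' \<in> S \<Longrightarrow> below M' \<le> below M"
    using \<open>finite S\<close> by (metis Max_ge finite_imageI image_eqI imageE)
  have "M' = M" if M': "M' \<in> D" "tile_le M M'" for M'
  proof (rule ccontr)
    assume "M' \<noteq> M"
    moreover have "{Q \<in> D. tile_le Q M} \<subseteq> {Q \<in> D. tile_le Q M'}"
      using M'(2) by (blast intro: tile_le_trans)
    ultimately have "{Q \<in> D. tile_le Q M} \<subset> {Q \<in> D. tile_le Q M'}"
      using M' tile_le_refl[of M'] tile_le_antisym[of M' M] by blast
    then have "below M < below M'"
      unfolding below_def by (rule psubset_card_mono[rotated]) (simp add: fin)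
    moreover have "M' \<in> S" using M(1) M' tile_le_trans unfolding S_def by blast
    ultimately show False using M(2) by fastforce
  qed
  then show ?thesis using M(1) unfolding maximal_tiles_def S_def by blast
qed

lemma down_closure_below_maximal:
  assumes "finite D" "P \<in> down_closure Ps D"
  shows "\<exists>M\<in>maximal_tiles D. tile_le P M"
  using assms exists_maximal_above[of D] tile_le_trans unfolding down_closure_def by blast

definition tree_part :: "bitile set \<Rightarrow> bitile set \<Rightarrow> (bitile \<Rightarrow> nat) \<Rightarrow> bitile \<Rightarrow> bitile set" where
  "tree_part Phi Ms idx M = {P \<in> Phi. tile_le P M \<and> (\<forall>M'\<in>Ms. tile_le P M' \<longrightarrow> idx M \<le> idx M')}"

text \<open>Convexity is preserved: a tile between two tiles of the tree has no more tops above it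
  than the lower one, and still has \<open>M\<close> above it.\<close>
lemma convex_tree_part:
  assumes cvx: "convex_tiles Phi"
  shows "convex_tiles (tree_part Phi Ms idx M)"
  unfolding convex_tiles_def
proof (intro ballI allI impI)
  fix P P'' P'
  assume P: "P \<in> tree_part Phi Ms idx M" and P'': "P'' \<in> tree_part Phi Ms idx M"
    and mid: "is_bitile P' \<and> tile_le P P' \<and> tile_le P' P''"
  have "P' \<in> Phi"
    using cvx P P'' mid unfolding convex_tiles_def tree_part_def by blast
  moreover have "tile_le P' M"
    using P'' mid tile_le_trans unfolding tree_part_def by blast
  moreover have "\<forall>M'\<in>Ms. tile_le P' M' \<longrightarrow> idx M \<le> idx M'"
    using P mid tile_le_trans unfolding tree_part_def by blast
  ultimately show "P' \<in> tree_part Phi Ms idx M"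
    by (simp add: tree_part_def)
qed

text \<open>Trees of distinct tops are disjoint, since each tile has only one first top above it.\<close>
lemma tree_part_disjoint:
  assumes inj: "inj_on idx Ms" and M: "M \<in> Ms" "M' \<in> Ms" "M \<noteq> M'"
  shows "tree_part Phi Ms idx M \<inter> tree_part Phi Ms idx M' = {}"
proof -
  have first: "idx M \<le> idx M'"
    if "M' \<in> Ms" "P \<in> tree_part Phi Ms idx M" "P \<in> tree_part Phi Ms idx M'" for P M M'
    using that unfolding tree_part_def by simp
  have "idx M \<noteq> idx M'"
    using inj M by (auto dest: inj_onD)
  then show ?thesis
    using first[OF M(2), of _ M] first[OF M(1), of _ M'] by (meson disjoint_iff le_antisym)
qed

lemma tree_part_cover:
  assumes "finite Ms" "P \<in> Phi" "\<exists>M\<in>Ms. tile_le P M"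
  shows "\<exists>M\<in>Ms. P \<in> tree_part Phi Ms idx M"
proof -
  have "finite {M \<in> Ms. tile_le P M}" "{M \<in> Ms. tile_le P M} \<noteq> {}"
    using assms by auto
  then obtain M where M: "M \<in> Ms" "tile_le P M"
    and first: "\<And>M'. M' \<in> Ms \<Longrightarrow> tile_le P M' \<Longrightarrow> idx M \<le> idx M'"
    using arg_min_if_finite[of _ idx] by (metis (no_types, lifting) mem_Collect_eq not_le)
  then show ?thesis
    using assms(2) unfolding tree_part_def by blast
qed

lemma convex_forest_from_tops:
  assumes fin: "finite Phi" and bit: "\<forall>P\<in>Phi. is_bitile P" and cvx: "convex_tiles Phi"
    and finM: "finite Ms" and bitM: "\<forall>M\<in>Ms. is_bitile M"
    and below: "\<forall>P\<in>Phi. \<exists>M\<in>Ms. tile_le P M"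
  shows "\<exists>F. convex_forest Phi F \<and> (\<Sum>f\<in>F. ilen (fst (snd f))) \<le> (\<Sum>M\<in>Ms. ilen (fst M))"
proof -
  obtain idx :: "bitile \<Rightarrow> nat" where idx: "inj_on idx Ms"
    using finite_imp_inj_to_nat_seg[OF finM] by blast
  have "\<exists>x. x \<in> snd M \<and> x \<ge> 0 \<and> \<not> dyadic_rational x" if "M \<in> Ms" for M
  proof -
    have "dyadic_int (snd M)" using bitM that by (simp add: is_bitile_def)
    then obtain x where "x \<in> snd M" "x \<ge> 0" "\<not> dyadic_rational x" by (rule nondyadic_point)
    then show ?thesis by blast
  qed
  then obtain \<xi> where \<xi>: "\<And>M. M \<in> Ms \<Longrightarrow> \<xi> M \<in> snd M \<and> \<xi> M \<ge> 0 \<and> \<not> dyadic_rational (\<xi> M)"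
    by metis
  define T where "T = tree_part Phi Ms idx"
  define F where "F = (\<lambda>M. (T M, fst M, \<xi> M)) ` Ms"
  have tree: "is_tree (T M) (fst M) (\<xi> M)" if "M \<in> Ms" for M
    using that bitM \<xi>[OF that] by (auto simp: is_tree_def is_bitile_def T_def tree_part_def tile_le_def)
  have "is_forest Phi F"
    unfolding is_forest_def
  proof (intro conjI)
    show "\<forall>(T', IT, x)\<in>F. is_tree T' IT x \<and> convex_tiles T'"
      using tree convex_tree_part[OF cvx] by (auto simp: F_def T_def)
    show "Phi = (\<Union>f\<in>F. fst f)"
      using tree_part_cover[OF finM] below by (auto simp: F_def T_def tree_part_def)
    show "\<forall>f\<in>F. \<forall>g\<in>F. f \<noteq> g \<longrightarrow> fst f \<inter> fst g = {}"
      using tree_part_disjoint[OF idx] by (fastforce simp: F_def T_def)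
  qed (use fin bit finM in \<open>simp_all add: F_def\<close>)
  moreover have "(\<Sum>f\<in>F. ilen (fst (snd f))) \<le> (\<Sum>M\<in>Ms. ilen (fst M))"
  proof -
    have "(\<Sum>f\<in>F. ilen (fst (snd f)))
        \<le> sum ((\<lambda>f. ilen (fst (snd f))) \<circ> (\<lambda>M. (T M, fst M, \<xi> M))) Ms"
      unfolding F_def by (rule sum_image_le[OF finM]) (simp add: ilen_def)
    then show ?thesis by (simp add: o_def)
  qed
  ultimately show ?thesis using cvx by (auto simp: convex_forest_def)
qed

text \<open>Pairwise disjoint subsets of \<open>[0,1]\<close> of positive measure have total measure at most 1.
  Positivity of the measure already forces measurability.\<close>
lemma sum_measure_disjoint_unit_interval:
  assumes fin: "finite S" and sub: "\<And>i. i \<in> S \<Longrightarrow> A i \<subseteq> {0..1::real}"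
    and pos: "\<And>i. i \<in> S \<Longrightarrow> measure lebesgue (A i) > 0"
    and disj: "pairwise (\<lambda>i j. disjnt (A i) (A j)) S"
  shows "(\<Sum>i\<in>S. measure lebesgue (A i)) \<le> 1"
proof -
  have meas: "A i \<in> fmeasurable lebesgue" if "i \<in> S" for i
  proof (rule fmeasurableI2[of "{0..1}"])
    show "A i \<in> sets lebesgue"
      using pos[OF that] measure_notin_sets by fastforce
  qed (use sub[OF that] in auto)
  have "(\<Sum>i\<in>S. measure lebesgue (A i)) = measure lebesgue (\<Union>i\<in>S. A i)"
    by (rule measure_UNION'[symmetric, OF fin meas disj])
  also have "\<dots> \<le> measure lebesgue {0..1::real}"
    using sub meas fin by (intro measure_mono_fmeasurable) auto
  finally show ?thesis by simp
qed

text \<open>Incomparable bitiles have disjoint sets \<open>E\<close>: a common point \<open>x\<close> would put \<open>N x\<close> in both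
  frequency intervals.\<close>
lemma Eset_disjoint:
  assumes "is_bitile P" "is_bitile Q" "\<not> tile_le P Q" "\<not> tile_le Q P"
  shows "disjnt (Eset N P) (Eset N Q)"
  using assms bitiles_comparable[of P Q] unfolding disjnt_def Eset_def by blast

definition tile_density :: "(real \<Rightarrow> real) \<Rightarrow> bitile \<Rightarrow> real" where
  "tile_density N P = measure lebesgue (Eset N P) / ilen (fst P)"

lemma mass_density: "mass N Ps = (if Ps = {} then 0 else Sup (tile_density N ` Ps))"
  by (simp add: mass_def tile_density_def)

lemma mass_le_bound:
  assumes "c \<ge> 0" "\<And>P. P \<in> Ps \<Longrightarrow> tile_density N P \<le> c"
  shows "mass N Ps \<le> c"
  using assms by (auto simp: mass_density intro: cSup_least)

text \<open>An antichain of bitiles in \<open>[0,1]\<close>, each of density above \<open>c > 0\<close>, has total time length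
  below \<open>1/c\<close>: the sets \<open>E(M)\<close> are disjoint and each has measure above \<open>c |I_M|\<close>.\<close>
lemma antichain_length_bound:
  assumes fin: "finite Ms" and sub: "Ms \<subseteq> bitiles01"
    and antichain: "\<And>M M'. M \<in> Ms \<Longrightarrow> M' \<in> Ms \<Longrightarrow> tile_le M M' \<Longrightarrow> M = M'"
    and c: "c > 0" and dense: "\<And>M. M \<in> Ms \<Longrightarrow> tile_density N M > c"
  shows "(\<Sum>M\<in>Ms. ilen (fst M)) \<le> 1 / c"
proof -
  have bit: "is_bitile M" "fst M \<subseteq> {0..1}" if "M \<in> Ms" for M
    using sub that by (auto simp: bitiles01_def)
  have E_large: "c * ilen (fst M) < measure lebesgue (Eset N M)" if "M \<in> Ms" for M
  proof -
    have "ilen (fst M) > 0"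
      using bit(1)[OF that] ilen_dyadic_pos by (simp add: is_bitile_def)
    then show ?thesis
      using dense[OF that] by (simp add: tile_density_def less_divide_eq mult.commute)
  qed
  have "(\<Sum>M\<in>Ms. measure lebesgue (Eset N M)) \<le> 1"
  proof (rule sum_measure_disjoint_unit_interval[OF fin])
    show "Eset N M \<subseteq> {0..1}" if "M \<in> Ms" for M
      using bit(2)[OF that] by (auto simp: Eset_def)
    show "measure lebesgue (Eset N M) > 0" if "M \<in> Ms" for M
      using E_large[OF that] c ilen_dyadic_pos[of "fst M"] bit(1)[OF that]
      by (simp add: is_bitile_def) (meson mult_pos_pos order.strict_trans)
    show "pairwise (\<lambda>M M'. disjnt (Eset N M) (Eset N M')) Ms"
      unfolding pairwise_def using antichain bit(1) Eset_disjoint by metis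
  qed
  moreover have "c * (\<Sum>M\<in>Ms. ilen (fst M)) \<le> (\<Sum>M\<in>Ms. measure lebesgue (Eset N M))"
    unfolding sum_distrib_left by (rule sum_mono) (use E_large in fastforce)
  ultimately show ?thesis
    using c by (simp add: le_divide_eq mult.commute)
qed

lemma density_decomposition:
  assumes fin: "finite Ps" and sub: "Ps \<subseteq> bitiles01" and cvx: "convex_tiles Ps"
    and pos: "mass N Ps > 0"
  shows "\<exists>Phi Plo F. Ps = Phi \<union> Plo \<and> Phi \<inter> Plo = {} \<and>
       convex_tiles Phi \<and> convex_tiles Plo \<and>
       mass N Plo \<le> mass N Ps / 2 \<and>
       convex_forest Phi F \<and>
       (\<Sum>f\<in>F. ilen (fst (snd f))) \<le> 2 / mass N Ps"
proof -
  define \<mu> where "\<mu> = mass N Ps"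
  define Dense where "Dense = {P \<in> Ps. tile_density N P > \<mu> / 2}"
  define Phi where "Phi = down_closure Ps Dense"
  define Plo where "Plo = Ps - Phi"
  define Ms where "Ms = maximal_tiles Dense"
  have \<mu>: "\<mu> > 0" using pos by (simp add: \<mu>_def)
  have bit: "\<forall>P\<in>Ps. is_bitile P" using sub by (auto simp: bitiles01_def)
  have Ms_sub: "Ms \<subseteq> Ps" by (auto simp: Ms_def maximal_tiles_def Dense_def)
  have split: "Ps = Phi \<union> Plo" "Phi \<inter> Plo = {}"
    by (auto simp: Plo_def Phi_def down_closure_def)
  have convex: "convex_tiles Phi" "convex_tiles Plo"
    unfolding Phi_def Plo_def using cvx by (rule convex_down_closure convex_diff_down_closure)+
  have low: "mass N Plo \<le> \<mu> / 2"
  proof (rule mass_le_bound)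
    show "tile_density N P \<le> \<mu> / 2" if "P \<in> Plo" for P
    proof -
      have "P \<in> Ps" "P \<notin> Dense"
        using that tile_le_refl[of P] unfolding Plo_def Phi_def down_closure_def by blast+
      then show ?thesis by (simp add: Dense_def not_less)
    qed
  qed (use \<mu> in simp)
  have "\<exists>F. convex_forest Phi F \<and> (\<Sum>f\<in>F. ilen (fst (snd f))) \<le> (\<Sum>M\<in>Ms. ilen (fst M))"
  proof (rule convex_forest_from_tops)
    show "\<forall>P\<in>Phi. \<exists>M\<in>Ms. tile_le P M"
      using down_closure_below_maximal[of Dense] fin unfolding Phi_def Ms_def Dense_def by simp
  qed (use fin bit Ms_sub convex finite_subset in \<open>auto simp: Phi_def down_closure_def\<close>)
  then obtain F where forest: "convex_forest Phi F"
    and tops: "(\<Sum>f\<in>F. ilen (fst (snd f))) \<le> (\<Sum>M\<in>Ms. ilen (fst M))"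
    by blast
  have "(\<Sum>M\<in>Ms. ilen (fst M)) \<le> 1 / (\<mu> / 2)"
  proof (rule antichain_length_bound)
    show "finite Ms" "Ms \<subseteq> bitiles01" using fin Ms_sub sub finite_subset by auto
    show "\<And>M M'. M \<in> Ms \<Longrightarrow> M' \<in> Ms \<Longrightarrow> tile_le M M' \<Longrightarrow> M = M'"
      by (auto simp: Ms_def maximal_tiles_def)
    show "\<And>M. M \<in> Ms \<Longrightarrow> \<mu> / 2 < tile_density N M"
      by (auto simp: Ms_def maximal_tiles_def Dense_def)
  qed (use \<mu> in simp)
  with tops have "(\<Sum>f\<in>F. ilen (fst (snd f))) \<le> 2 / \<mu>" by simp
  with split convex low forest show ?thesis
    unfolding \<mu>_def by blast
qed

theorem lemma5p1:
  shows "\<exists>C>0. \<forall>(N :: real \<Rightarrow> real) (Ps :: bitile set).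
    N \<in> borel_measurable (lebesgue_on {0..}) \<and> (\<forall>x\<ge>0. N x \<ge> 0) \<and>
    finite Ps \<and> Ps \<subseteq> bitiles01 \<and> convex_tiles Ps \<and> mass N Ps > 0 \<longrightarrow>
    (\<exists>Phi Plo F. Ps = Phi \<union> Plo \<and> Phi \<inter> Plo = {} \<and>
       convex_tiles Phi \<and> convex_tiles Plo \<and>
       mass N Plo \<le> mass N Ps / 2 \<and>
       convex_forest Phi F \<and>
       (\<Sum>f\<in>F. ilen (fst (snd f))) \<le> C / mass N Ps)"
  using density_decomposition by (intro exI[of _ "2::real"]) auto

end
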